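(* Let $n\ge 1$ and let $T\in M(n;\mathbb{C})$ be non-singular with $\mathrm{Im}\,T$ positive definite. Let $r\in\mathbb{N}$, $A=(a_{ij})\in M(n;\mathbb{Z})$, $p,q\in\mathbb{R}^n$, let $r'\in\mathbb{N}$ be the integer attached to $(r,A)$ as in the context, and let $\mathcal{U}=\{V_1,\dots,V_n,U_1,\dots,U_n\}\subset U(r')$ satisfy $V_jV_k=V_kV_j$, $U_jU_k=U_kU_j$, $\zeta^{-a_{kj}}U_kV_j=V_jU_k$ for all $j,k$, where $\zeta=e^{2\pi\mathbf{i}/r}$. Then the complex vector bundle $E_{(r,A,r',\mathcal{U},p,q)}\to T^{2n}_{J=T}$ with connection $\nabla_{(r,A,r',\mathcal{U},p,q)}$ is holomorphic (that is, the $(0,2)$-part of the curvature of $\nabla_{(r,A,r',\mathcal{U},p,q)}$ vanishes, so that its $(0,1)$-part defines a holomorphic structure) if and only if $AT=(AT)^t$.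
   Context: $T^{2n}_{J=T}:=\mathbb{C}^n/2\pi(\mathbb{Z}^n\oplus T\mathbb{Z}^n)$, identified with $\mathbb{R}^{2n}/2\pi\mathbb{Z}^{2n}$ via real coordinates $(x,y)\in\mathbb{R}^n\times\mathbb{R}^n$, with complex coordinates $z=x+Ty$. Definition of $r'$: choose $\mathcal{A},\mathcal{B}\in GL(n;\mathbb{Z})$ with $\mathcal{A}A\mathcal{B}=\mathrm{diag}(\tilde a_1,\dots,\tilde a_s,0,\dots,0)$, $\tilde a_i\in\mathbb{N}$, $\tilde a_i\mid\tilde a_{i+1}$; write $\tilde a_i/r=a_i'/r_i'$ with $r_i'\in\mathbb{N}$, $a_i'\in\mathbb{Z}$, $\gcd(r_i',a_i')=1$, and set $r':=r_1'\cdots r_s'$ (this depends only on $(r,A)$). The rank-$r'$ complex vector bundle $E_{(r,A,r',\mathcal{U},p,q)}$ is defined by transition functions: its smooth sections are smooth maps $\psi:\mathbb{R}^{2n}\to\mathbb{C}^{r'}$ with $\psi(x+2\pi e_j,y)=e^{\frac{\mathbf{i}}{r}a_jy}V_j\psi(x,y)$ and $\psi(x,y+2\pi e_k)=U_k\psi(x,y)$, where $a_jy:=\sum_i a_{ij}y_i$ ($e_j$ the standard basis vectors). Its connection is $\nabla_{(r,A,r',\mathcal{U},p,q)}:=d-\frac{\mathbf{i}}{2\pi}\left(\frac1r x^tA^t+\frac1r p^t+\frac1r q^tT\right)dy\cdot I_{r'}$, where $dy=(dy_1,\dots,dy_n)^t$; it is compatible with the transition functions. *)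

theory Defs
  imports "HOL-Analysis.Analysis"
begin

text \<open>Points of the universal cover R^{2n} of the torus are pairs (x,y) of real n-vectors;
  tangent vectors are pairs as well.\<close>
type_synonym 'n pt = "(real^'n) \<times> (real^'n)"

definition cscale :: "complex \<Rightarrow> complex^'m^'m \<Rightarrow> complex^'m^'m" where
  "cscale c M = (\<chi> i j. c * M$i$j)"

definition cadj :: "complex^'m^'m \<Rightarrow> complex^'m^'m" where
  "cadj M = (\<chi> i j. cnj (M$j$i))"

definition unitary_mat :: "complex^'m^'m \<Rightarrow> bool" where
  "unitary_mat M \<longleftrightarrow> M ** cadj M = mat 1 \<and> cadj M ** M = mat 1"

text \<open>The integer r' attached to (r,A): choose a Smith normal form (up to permutation of
  the diagonal, which GL(n,Z) allows) P A Q = diag(d), nonzero entries positive and totally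
  ordered by divisibility; write d_i / r = a_i'/r_i' in lowest terms, i.e.
  r_i' = r / gcd(r, d_i), and take the product over the nonzero d_i.\<close>
definition rprime :: "nat \<Rightarrow> int^'n^'n \<Rightarrow> nat" where
  "rprime r A = (SOME m. \<exists>P Q :: int^'n^'n. \<exists>d :: 'n \<Rightarrow> int.
      \<bar>det P\<bar> = 1 \<and> \<bar>det Q\<bar> = 1 \<and>
      P ** A ** Q = (\<chi> i j. if i = j then d i else 0) \<and>
      (\<forall>i. d i \<ge> 0) \<and>
      (\<forall>i j. d i \<noteq> 0 \<longrightarrow> d j \<noteq> 0 \<longrightarrow> d i dvd d j \<or> d j dvd d i) \<and>
      m = (\<Prod>i\<in>{i. d i \<noteq> 0}. r div gcd r (nat (d i))))"

text \<open>The connection 1-form of \<nabla>_{(r,A,r',U,p,q)} = d + omega at the point P = (x,y),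
  evaluated on the tangent vector v = (xi,eta):
  omega = -(i/2pi) (1/r)(x^t A^t + p^t + q^t T) dy \<cdot> I_{r'}.\<close>
definition conn_form ::
  "nat \<Rightarrow> int^'n^'n \<Rightarrow> real^'n \<Rightarrow> real^'n \<Rightarrow> complex^'n^'n \<Rightarrow>
   'n pt \<Rightarrow> 'n pt \<Rightarrow> complex^'m^'m" where
  "conn_form r A p q T P v =
     cscale (- (\<i> / (2 * pi)) *
        (\<Sum>j\<in>UNIV. ((\<Sum>i\<in>UNIV. of_real (fst P $ i) * of_int (A$j$i)) / of_nat r
                      + of_real (p$j) / of_nat r
                      + (\<Sum>i\<in>UNIV. of_real (q$i) * T$i$j) / of_nat r)
                     * of_real (snd v $ j)))
       (mat 1)"

text \<open>Curvature of d + omega for a matrix-valued 1-form omega on R^{2n}: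
  F(u,v) = d omega(u,v) + [omega(u), omega(v)], with
  d omega(u,v) = D_u (omega(v)) - D_v (omega(u)) (constant vector fields u,v).\<close>
definition curvature ::
  "(('n::finite) pt \<Rightarrow> 'n pt \<Rightarrow> complex^('m::finite)^'m) \<Rightarrow> 'n pt \<Rightarrow> 'n pt \<Rightarrow> 'n pt \<Rightarrow> complex^'m^'m" where
  "curvature \<omega> P u v =
     frechet_derivative (\<lambda>Q. \<omega> Q v) (at P) u - frechet_derivative (\<lambda>Q. \<omega> Q u) (at P) v
     + (\<omega> P u ** \<omega> P v - \<omega> P v ** \<omega> P u)"

text \<open>Complex-bilinear extension of a real 2-form to complexified tangent vectors
  a + i b (a, b real tangent vectors).\<close>
definition complexify2 ::
  "('n pt \<Rightarrow> 'n pt \<Rightarrow> complex^'m^'m) \<Rightarrow> ('n pt \<times> 'n pt) \<Rightarrow> ('n pt \<times> 'n pt) \<Rightarrow> complex^'m^'m" where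
  "complexify2 F w1 w2 =
     (F (fst w1) (fst w2) - F (snd w1) (snd w2))
     + cscale \<i> (F (fst w1) (snd w2) + F (snd w1) (fst w2))"

text \<open>Complexified tangent vector w = a + i b lies in T^{0,1} of T^{2n}_{J=T}, i.e. is killed
  by all dz_k, where z = x + T y, so dz(xi,eta) = xi + T eta.\<close>
definition in_T01 :: "complex^'n^'n \<Rightarrow> ('n pt \<times> 'n pt) \<Rightarrow> bool" where
  "in_T01 T w \<longleftrightarrow> (\<forall>k.
     (of_real (fst (fst w) $ k) + \<i> * of_real (fst (snd w) $ k))
     + (\<Sum>l\<in>UNIV. T$k$l * (of_real (snd (fst w) $ l) + \<i> * of_real (snd (snd w) $ l))) = 0)"

definition holomorphic_conn ::
  "complex^'n^'n \<Rightarrow> ('n pt \<Rightarrow> 'n pt \<Rightarrow> complex^'m^'m) \<Rightarrow> bool" where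
  "holomorphic_conn T \<omega> \<longleftrightarrow>
     (\<forall>P w1 w2. in_T01 T w1 \<longrightarrow> in_T01 T w2 \<longrightarrow> complexify2 (curvature \<omega> P) w1 w2 = 0)"

end

theory Submission
  imports Defs
begin

text \<open>The connection is abelian: it is d + omega with omega a scalar multiple of the identity,
  so its curvature is d omega = -(i/2 pi r) sum a_ji dx_i wedge dy_j, a constant 2-form that does
  not involve p, q or the transition data. A complexified tangent vector of type (0,1) satisfies
  dx = -T dy, and dy ranges over all of C^n on such vectors; hence the (0,2)-part of the curvature
  is -(i/2 pi r) times the antisymmetric part of the bilinear form of AT, which vanishes exactly
  when AT is symmetric. The hypotheses on T, r' and the U_k, V_j only make the bundle well
  defined; the curvature computation does not use them.\<close>

lemma cscale_add: "cscale (a + b) M = cscale a M + cscale b M"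
  by (simp add: cscale_def vec_eq_iff distrib_right)

lemma cscale_diff: "cscale (a - b) M = cscale a M - cscale b M"
  by (simp add: cscale_def vec_eq_iff left_diff_distrib)

lemma cscale_scaleR: "cscale (c *\<^sub>R a) M = c *\<^sub>R cscale a M"
  by (simp add: cscale_def vec_eq_iff)

lemma cscale_mult: "cscale (a * b) M = cscale a (cscale b M)"
  by (simp add: cscale_def vec_eq_iff mult.assoc)

lemma bounded_linear_cscale: "bounded_linear (\<lambda>c. cscale c M)"
  by (rule linear_conv_bounded_linear[THEN iffD1], rule linearI)
    (simp_all only: cscale_add cscale_scaleR)

lemma cscale_mat1: "cscale c (mat 1) = mat c"
  by (simp add: cscale_def mat_def vec_eq_iff)

lemma mat_mult_mat: "mat a ** mat b = (mat (a * b) :: 'a::semiring_1^'n^'n)"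
proof -
  have "(\<Sum>k\<in>UNIV. (if i = k then a else 0) * (if k = j then b else 0))
      = (if i = j then a * b else 0)" for i j :: 'n
    by (simp add: if_distrib[where f = "\<lambda>z. z * _"] cong: if_cong)
  then show ?thesis
    by (simp add: vec_eq_iff matrix_matrix_mult_def mat_def)
qed

lemma mat_eq_0_iff: "(mat c :: 'a::zero^'n^'n) = 0 \<longleftrightarrow> c = 0"
  by (auto simp: vec_eq_iff mat_def)

lemma curvature_scalar_form:
  fixes \<omega> :: "'n::finite pt \<Rightarrow> 'n pt \<Rightarrow> complex^'m::finite^'m"
  assumes scalar: "\<And>v. \<omega> P v = cscale (c v) (mat 1)"
    and deriv: "\<And>v. ((\<lambda>Q. \<omega> Q v) has_derivative D v) (at P)"
  shows "curvature \<omega> P u v = D v u - D u v"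
proof -
  have "\<omega> P u ** \<omega> P v = \<omega> P v ** \<omega> P u"
    by (simp add: scalar cscale_mat1 mat_mult_mat mult.commute)
  then show ?thesis
    by (simp add: curvature_def frechet_derivative_at[OF deriv, symmetric])
qed

lemma complexify2_cscale:
  assumes "\<And>u v. F u v = cscale (f u v) M"
  shows "complexify2 F w1 w2 =
     cscale (f (fst w1) (fst w2) - f (snd w1) (snd w2)
       + \<i> * (f (fst w1) (snd w2) + f (snd w1) (fst w2))) M"
  by (simp add: complexify2_def assms cscale_add cscale_diff cscale_mult)

definition bilinear_form :: "'a::comm_semiring_1^'n^'n \<Rightarrow> 'a^'n \<Rightarrow> 'a^'n \<Rightarrow> 'a" where
  "bilinear_form M x y = (\<Sum>i\<in>UNIV. \<Sum>j\<in>UNIV. x$i * M$i$j * y$j)"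

lemma bilinear_form_add_left:
  "bilinear_form M (x + x') y = bilinear_form M x y + bilinear_form M x' y"
  by (simp add: bilinear_form_def distrib_right sum.distrib)

lemma bilinear_form_add_right:
  "bilinear_form M x (y + y') = bilinear_form M x y + bilinear_form M x y'"
  by (simp add: bilinear_form_def distrib_left sum.distrib)

lemma bilinear_form_scale_left: "bilinear_form M (c *s x) y = c * bilinear_form M x y"
  by (simp add: bilinear_form_def sum_distrib_left mult.assoc)

lemma bilinear_form_scale_right: "bilinear_form M x (c *s y) = c * bilinear_form M x y"
  by (simp add: bilinear_form_def sum_distrib_left mult_ac)

lemma bilinear_form_neg_left:
  "bilinear_form M (- x) y = - bilinear_form (M :: 'a::comm_ring_1^'n^'n) x y"
  by (simp add: bilinear_form_def sum_negf)

lemma bilinear_form_transpose: "bilinear_form (transpose M) x y = bilinear_form M y x"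
  unfolding bilinear_form_def transpose_def by (subst sum.swap) (simp add: mult_ac)

lemma bilinear_form_matrix_vector_left:
  "bilinear_form M (N *v x) y = bilinear_form (transpose N ** M) x y"
proof -
  have "bilinear_form M (N *v x) y
      = (\<Sum>i\<in>UNIV. \<Sum>j\<in>UNIV. \<Sum>k\<in>UNIV. N$i$k * x$k * M$i$j * y$j)"
    by (simp add: bilinear_form_def matrix_vector_mult_def sum_distrib_right)
  also have "\<dots> = (\<Sum>i\<in>UNIV. \<Sum>k\<in>UNIV. \<Sum>j\<in>UNIV. N$i$k * x$k * M$i$j * y$j)"
    by (rule sum.cong[OF refl], rule sum.swap)
  also have "\<dots> = (\<Sum>k\<in>UNIV. \<Sum>j\<in>UNIV. \<Sum>i\<in>UNIV. N$i$k * x$k * M$i$j * y$j)"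
    by (subst sum.swap, rule sum.cong[OF refl], rule sum.swap)
  also have "\<dots> = bilinear_form (transpose N ** M) x y"
    by (simp add: bilinear_form_def matrix_matrix_mult_def transpose_def
        sum_distrib_left sum_distrib_right mult_ac)
  finally show ?thesis .
qed

lemma sum_axis_mult: "(\<Sum>k\<in>UNIV. axis i (1::'a::semiring_1) $ k * f k) = f i"
  by (simp add: axis_def if_distrib[where f = "\<lambda>z. z * _"] cong: if_cong)

lemma bilinear_form_axis: "bilinear_form M (axis i 1) (axis j 1) = M$i$j"
proof -
  have "bilinear_form M (axis i 1) (axis j 1)
      = (\<Sum>k\<in>UNIV. axis i 1 $ k * (\<Sum>l\<in>UNIV. axis j 1 $ l * M$k$l))"
    by (simp add: bilinear_form_def sum_distrib_left mult_ac)
  then show ?thesis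
    by (simp only: sum_axis_mult)
qed

lemma bilinear_form_symmetric_iff:
  "(\<forall>x y. bilinear_form M x y = bilinear_form M y x) \<longleftrightarrow> transpose M = M"
proof
  assume "\<forall>x y. bilinear_form M x y = bilinear_form M y x"
  then have "M$i$j = M$j$i" for i j
    by (metis bilinear_form_axis)
  then show "transpose M = M"
    by (simp add: vec_eq_iff transpose_def)
qed (metis bilinear_form_transpose)

definition of_int_mat :: "int^'n^'m \<Rightarrow> 'a::ring_1^'n^'m" where
  "of_int_mat A = (\<chi> i j. of_int (A$i$j))"

definition cvec :: "real^'n \<Rightarrow> complex^'n" where
  "cvec x = (\<chi> i. of_real (x$i))"

lemma cvec_add: "cvec (x + y) = cvec x + cvec y"
  by (simp add: cvec_def vec_eq_iff)

lemma cvec_scaleR: "cvec (c *\<^sub>R x) = of_real c *s cvec x"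
  by (simp add: cvec_def vec_eq_iff)

lemma cvec_0: "cvec 0 = 0"
  by (simp add: cvec_def vec_eq_iff)

lemma conn_form_affine:
  fixes P v :: "'n::finite pt"
  shows "conn_form r A p q T P v =
     cscale (- \<i> / (2 * pi * r) *
       bilinear_form (transpose (of_int_mat A)) (cvec (fst P)) (cvec (snd v))) (mat 1)
     + conn_form r A p q T 0 v"
proof -
  define B where
    "B P = bilinear_form (transpose (of_int_mat A)) (cvec (fst P)) (cvec (snd v))" for P :: "'n pt"
  define K where
    "K = (\<Sum>j\<in>UNIV. (of_real (p$j) / of_nat r + (\<Sum>i\<in>UNIV. of_real (q$i) * T$i$j) / of_nat r)
                   * of_real (snd v $ j))"
  have B: "B P = (\<Sum>j\<in>UNIV. (\<Sum>i\<in>UNIV. of_real (fst P $ i) * of_int (A$j$i)) * of_real (snd v $ j))"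
    for P
    unfolding B_def bilinear_form_def
    by (subst sum.swap) (simp add: of_int_mat_def transpose_def cvec_def sum_distrib_right)
  have conn: "conn_form r A p q T P v = cscale (- (\<i> / (2 * pi)) * (B P / of_nat r + K)) (mat 1)" for P
    unfolding conn_form_def B K_def
    by (simp add: add.assoc distrib_right sum.distrib sum_divide_distrib sum_distrib_right)
  have "B 0 = 0"
    by (simp add: B_def cvec_0 bilinear_form_def)
  then show ?thesis
    unfolding conn cscale_add[symmetric] by (simp add: B_def algebra_simps)
qed

lemma has_derivative_conn_form:
  fixes v :: "'n::finite pt"
  shows "((\<lambda>Q. conn_form r A p q T Q v :: complex^'m::finite^'m) has_derivative
     (\<lambda>u. cscale (- \<i> / (2 * pi * r) *
        bilinear_form (transpose (of_int_mat A)) (cvec (fst u)) (cvec (snd v))) (mat 1))) (at P)"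
proof -
  let ?L = "\<lambda>u::'n pt. - \<i> / (2 * pi * r) *
    bilinear_form (transpose (of_int_mat A)) (cvec (fst u)) (cvec (snd v))"
  have "linear ?L"
  proof (rule linearI)
    show "?L (u + u') = ?L u + ?L u'" for u u'
      by (simp add: cvec_add bilinear_form_add_left distrib_left)
    show "?L (c *\<^sub>R u) = c *\<^sub>R ?L u" for c u
      by (simp add: cvec_scaleR bilinear_form_scale_left) (simp add: scaleR_conv_of_real)
  qed
  then have "bounded_linear (\<lambda>u. cscale (?L u) (mat 1) :: complex^'m^'m)"
    using bounded_linear_compose[OF bounded_linear_cscale] linear_conv_bounded_linear by blast
  then show ?thesis
    by (subst conn_form_affine) (rule has_derivative_add_const, rule bounded_linear_imp_has_derivative)
qed

definition dx_wedge_dy :: "complex^'n^'n \<Rightarrow> 'n pt \<Rightarrow> 'n pt \<Rightarrow> complex" where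
  "dx_wedge_dy M u v =
     bilinear_form M (cvec (fst u)) (cvec (snd v)) - bilinear_form M (cvec (fst v)) (cvec (snd u))"

lemma curvature_conn_form:
  "curvature (conn_form r A p q T :: 'n::finite pt \<Rightarrow> 'n pt \<Rightarrow> complex^'m::finite^'m) P u v =
     cscale (- \<i> / (2 * pi * r) * dx_wedge_dy (transpose (of_int_mat A)) u v) (mat 1)"
  unfolding curvature_scalar_form[OF conn_form_def has_derivative_conn_form]
  by (simp only: dx_wedge_dy_def right_diff_distrib cscale_diff)

definition complex_dx :: "'n pt \<times> 'n pt \<Rightarrow> complex^'n" where
  "complex_dx w = cvec (fst (fst w)) + \<i> *s cvec (fst (snd w))"

definition complex_dy :: "'n pt \<times> 'n pt \<Rightarrow> complex^'n" where
  "complex_dy w = cvec (snd (fst w)) + \<i> *s cvec (snd (snd w))"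

lemma dx_wedge_dy_complexify:
  "dx_wedge_dy M (fst w1) (fst w2) - dx_wedge_dy M (snd w1) (snd w2)
     + \<i> * (dx_wedge_dy M (fst w1) (snd w2) + dx_wedge_dy M (snd w1) (fst w2))
   = bilinear_form M (complex_dx w1) (complex_dy w2)
     - bilinear_form M (complex_dx w2) (complex_dy w1)"
  by (simp add: dx_wedge_dy_def complex_dx_def complex_dy_def bilinear_form_add_left
      bilinear_form_add_right bilinear_form_scale_left bilinear_form_scale_right algebra_simps)

lemma in_T01_iff: "in_T01 T w \<longleftrightarrow> complex_dx w = - (T *v complex_dy w)"
  by (simp add: in_T01_def complex_dx_def complex_dy_def cvec_def matrix_vector_mult_def
      vec_eq_iff eq_neg_iff_add_eq_0)

lemma ex_in_T01_complex_dy_eq: "\<exists>w. in_T01 T w \<and> complex_dy w = y"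
proof -
  have split: "z = cvec (\<chi> k. Re (z$k)) + \<i> *s cvec (\<chi> k. Im (z$k))" for z :: "complex^'n"
    by (simp add: cvec_def vec_eq_iff complex_eq)
  define x where "x = - (T *v y)"
  define w where
    "w = (((\<chi> k. Re (x$k)), (\<chi> k. Re (y$k))), ((\<chi> k. Im (x$k)), (\<chi> k. Im (y$k))))"
  have "complex_dx w = x" "complex_dy w = y"
    unfolding complex_dx_def complex_dy_def w_def by (simp_all flip: split)
  then show ?thesis
    unfolding in_T01_iff x_def by blast
qed

lemma bilinear_form_complex_dx_T01:
  assumes "in_T01 T w"
  shows "bilinear_form (transpose (of_int_mat A)) (complex_dx w) y
       = - bilinear_form (of_int_mat A ** T) y (complex_dy w)"
  using assms
  by (simp add: in_T01_iff bilinear_form_neg_left bilinear_form_matrix_vector_left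
      bilinear_form_transpose flip: matrix_transpose_mul)

lemma complexify2_curvature_conn_form:
  "complexify2
     (curvature (conn_form r A p q T :: 'n::finite pt \<Rightarrow> 'n pt \<Rightarrow> complex^'m::finite^'m) P) w1 w2 =
     cscale (- \<i> / (2 * pi * r) *
       (bilinear_form (transpose (of_int_mat A)) (complex_dx w1) (complex_dy w2)
        - bilinear_form (transpose (of_int_mat A)) (complex_dx w2) (complex_dy w1))) (mat 1)"
  unfolding complexify2_cscale[OF curvature_conn_form] dx_wedge_dy_complexify[symmetric]
  by (simp add: algebra_simps)

lemma holomorphic_conn_form_iff:
  assumes "r > 0"
  shows "holomorphic_conn T
       (conn_form r A p q T :: 'n::finite pt \<Rightarrow> 'n pt \<Rightarrow> complex^'m::finite^'m)
     \<longleftrightarrow> (\<forall>y z. bilinear_form (of_int_mat A ** T) y z = bilinear_form (of_int_mat A ** T) z y)"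
proof -
  let ?M = "of_int_mat A ** T"
  have "- \<i> / (2 * pi * r) \<noteq> 0"
    using assms by simp
  then have "complexify2 (curvature (conn_form r A p q T :: _ \<Rightarrow> _ \<Rightarrow> complex^'m^'m) P) w1 w2 = 0
      \<longleftrightarrow> bilinear_form ?M (complex_dy w1) (complex_dy w2)
        = bilinear_form ?M (complex_dy w2) (complex_dy w1)"
    if "in_T01 T w1" "in_T01 T w2" for P w1 w2
    using that
    by (simp add: complexify2_curvature_conn_form bilinear_form_complex_dx_T01
        cscale_mat1 mat_eq_0_iff)
  then show ?thesis
    unfolding holomorphic_conn_def by (metis ex_in_T01_complex_dy_eq)
qed

theorem proposition3p1:
  fixes T :: "complex^'n^'n" and r :: nat and A :: "int^'n^'n"
    and p q :: "real^'n"
    and V U :: "'n \<Rightarrow> complex^'m^'m"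
  assumes "invertible T"
    and "\<forall>v :: real^'n. v \<noteq> 0 \<longrightarrow> (\<Sum>i\<in>UNIV. \<Sum>j\<in>UNIV. v$i * Im (T$i$j) * v$j) > 0"
    and "r > 0"
    and "CARD('m) = rprime r A"
    and "\<forall>j. unitary_mat (V j) \<and> unitary_mat (U j)"
    and "\<forall>j k. V j ** V k = V k ** V j"
    and "\<forall>j k. U j ** U k = U k ** U j"
    and "\<forall>j k. cscale (exp (2 * pi * \<i> / of_nat r) powi (- A$k$j)) (U k ** V j) = V j ** U k"
  shows "holomorphic_conn T (conn_form r A p q T :: 'n pt \<Rightarrow> 'n pt \<Rightarrow> complex^'m^'m)
     \<longleftrightarrow> (\<chi> i j. of_int (A$i$j)) ** T = transpose ((\<chi> i j. of_int (A$i$j)) ** T)"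
proof -
  have "holomorphic_conn T (conn_form r A p q T :: 'n pt \<Rightarrow> 'n pt \<Rightarrow> complex^'m^'m)
      \<longleftrightarrow> transpose (of_int_mat A ** T) = of_int_mat A ** T"
    by (simp only: holomorphic_conn_form_iff[OF \<open>r > 0\<close>] bilinear_form_symmetric_iff)
  then show ?thesis
    unfolding of_int_mat_def by auto
qed

end
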